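(* Let $B^\bullet=(B^{-1}\xrightarrow{d}B^0)$ and $G^\bullet=(G^{-1}\xrightarrow{d}G^0)$ be crossed modules and $\pi,\pi':B^\bullet\to G^\bullet$ homomorphisms of crossed modules. Let the strict 2-group $\mathfrak B=\operatorname{Cone}(B^\bullet)$ act on the underlying groupoid $\mathscr X$ of $\mathfrak G=\operatorname{Cone}(G^\bullet)$ via $x\mapsto \pi(b)\,x\,\pi'(b)^{-1}$. Identify $\pi_1(\mathfrak B)=H^{-1}(B^\bullet):=\operatorname{Ker}(B^{-1}\xrightarrow{d}B^0)$ and, for each $g\in G^0$, $\operatorname{Aut}_{\mathscr X}g=H^{-1}(G^\bullet):=\operatorname{Ker}(G^{-1}\xrightarrow{d}G^0)$. Then the homomorphism $\phi_g:H^{-1}(B^\bullet)\to H^{-1}(G^\bullet)$ induced by the action is $$\phi_g(\beta)=\pi(\beta)\cdot{}^{g}\pi'(\beta)^{-1}={}^{g}\pi'(\beta)^{-1}\cdot\pi(\beta),\qquad \beta\in H^{-1}(B^\bullet).$$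
   Context: A crossed module $G^\bullet$ consists of groups $G^0,G^{-1}$, an action of $G^0$ on $G^{-1}$ written $\gamma\mapsto{}^g\gamma$, and a homomorphism $d:G^{-1}\to G^0$ with $d({}^g\gamma)=g\,d(\gamma)g^{-1}$ and ${}^{d(\gamma)}\gamma'=\gamma\gamma'\gamma^{-1}$. A homomorphism of crossed modules is a pair of group homomorphisms in degrees $0$ and $-1$ commuting with $d$ and compatible with the actions. $\operatorname{Cone}(G^{-1}\xrightarrow{d}G^0)$ is the strict 2-group whose objects are the elements of $G^0$, with $\operatorname{Mor}(g,g')=\{\gamma\in G^{-1}: d(\gamma)g=g'\}$, composition given by multiplication in $G^{-1}$, tensor product of objects by multiplication in $G^0$, and tensor product of morphisms $\operatorname{Mor}(g_1,g_1')\times\operatorname{Mor}(g_2,g_2')\to\operatorname{Mor}(g_1g_2,g_1'g_2')$ given by $(\gamma_1,\gamma_2)\mapsto\gamma_1\cdot{}^{g_1}\gamma_2$. The pair $(\pi,\pi')$ gives a homomorphism of strict 2-groups $\mathfrak B\to\mathfrak G\times\mathfrak G$, and $\mathfrak G\times\mathfrak G$ acts on $\mathscr X$ by $(g,g')\cdot x=g\,x\,(g')^{-1}$. For a 2-group $\mathscr G$ acting on a groupoid $\mathscr X$, $\pi_1(\mathscr G)=\operatorname{Aut}(1_{\mathscr G})$, and $\phi_x:\pi_1(\mathscr G)\to\operatorname{Aut}_{\mathscr X}x$ sends an automorphism of the unit object to the induced automorphism of $1_{\mathscr G}\cdot x=x$. *)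

theory Defs
  imports "HOL-Algebra.Algebra"
begin

definition crossed_module ::
  "('a, 'm) monoid_scheme \<Rightarrow> ('b, 'n) monoid_scheme \<Rightarrow> ('a \<Rightarrow> 'b \<Rightarrow> 'b) \<Rightarrow> ('b \<Rightarrow> 'a) \<Rightarrow> bool"
where
  "crossed_module G0 G1 act d \<longleftrightarrow>
     group G0 \<and> group G1 \<and> d \<in> hom G1 G0 \<and>
     (\<forall>g\<in>carrier G0. act g \<in> hom G1 G1) \<and>
     (\<forall>\<gamma>\<in>carrier G1. act \<one>\<^bsub>G0\<^esub> \<gamma> = \<gamma>) \<and>
     (\<forall>g\<in>carrier G0. \<forall>h\<in>carrier G0. \<forall>\<gamma>\<in>carrier G1.
         act (g \<otimes>\<^bsub>G0\<^esub> h) \<gamma> = act g (act h \<gamma>)) \<and>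
     (\<forall>g\<in>carrier G0. \<forall>\<gamma>\<in>carrier G1.
         d (act g \<gamma>) = g \<otimes>\<^bsub>G0\<^esub> d \<gamma> \<otimes>\<^bsub>G0\<^esub> inv\<^bsub>G0\<^esub> g) \<and>
     (\<forall>\<gamma>\<in>carrier G1. \<forall>\<gamma>'\<in>carrier G1.
         act (d \<gamma>) \<gamma>' = \<gamma> \<otimes>\<^bsub>G1\<^esub> \<gamma>' \<otimes>\<^bsub>G1\<^esub> inv\<^bsub>G1\<^esub> \<gamma>)"

definition crossed_module_hom ::
  "('a, 'm) monoid_scheme \<Rightarrow> ('b, 'n) monoid_scheme \<Rightarrow> ('a \<Rightarrow> 'b \<Rightarrow> 'b) \<Rightarrow> ('b \<Rightarrow> 'a) \<Rightarrow>
   ('c, 'o) monoid_scheme \<Rightarrow> ('e, 'p) monoid_scheme \<Rightarrow> ('c \<Rightarrow> 'e \<Rightarrow> 'e) \<Rightarrow> ('e \<Rightarrow> 'c) \<Rightarrow>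
   ('a \<Rightarrow> 'c) \<Rightarrow> ('b \<Rightarrow> 'e) \<Rightarrow> bool"
where
  "crossed_module_hom B0 B1 actB dB G0 G1 actG dG f0 f1 \<longleftrightarrow>
     f0 \<in> hom B0 G0 \<and> f1 \<in> hom B1 G1 \<and>
     (\<forall>\<beta>\<in>carrier B1. f0 (dB \<beta>) = dG (f1 \<beta>)) \<and>
     (\<forall>b\<in>carrier B0. \<forall>\<beta>\<in>carrier B1. f1 (actB b \<beta>) = actG (f0 b) (f1 \<beta>))"

text \<open>A morphism of Cone(G) is represented as a pair (g, \<gamma>) of its source object g \<in> G0
  and \<gamma> \<in> G1; its target is d(\<gamma>) g.  The identity of g is (g, 1).\<close>

definition cone_id :: "('b, 'n) monoid_scheme \<Rightarrow> 'a \<Rightarrow> 'a \<times> 'b" where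
  "cone_id G1 g = (g, \<one>\<^bsub>G1\<^esub>)"

definition cone_tensor ::
  "('a, 'm) monoid_scheme \<Rightarrow> ('b, 'n) monoid_scheme \<Rightarrow> ('a \<Rightarrow> 'b \<Rightarrow> 'b) \<Rightarrow>
   'a \<times> 'b \<Rightarrow> 'a \<times> 'b \<Rightarrow> 'a \<times> 'b"
where
  "cone_tensor G0 G1 act m1 m2 =
     (fst m1 \<otimes>\<^bsub>G0\<^esub> fst m2, snd m1 \<otimes>\<^bsub>G1\<^esub> act (fst m1) (snd m2))"

text \<open>Tensor inverse of a morphism \<gamma> : g \<rightarrow> g': the unique morphism g\<inverse> \<rightarrow> g'\<inverse> whose
  tensor product with \<gamma> is the identity of the unit object.\<close>
definition cone_tensor_inv ::
  "('a, 'm) monoid_scheme \<Rightarrow> ('b, 'n) monoid_scheme \<Rightarrow> ('a \<Rightarrow> 'b \<Rightarrow> 'b) \<Rightarrow>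
   'a \<times> 'b \<Rightarrow> 'a \<times> 'b"
where
  "cone_tensor_inv G0 G1 act m =
     (inv\<^bsub>G0\<^esub> (fst m), act (inv\<^bsub>G0\<^esub> (fst m)) (inv\<^bsub>G1\<^esub> (snd m)))"

definition cone_biaction ::
  "('a, 'm) monoid_scheme \<Rightarrow> ('b, 'n) monoid_scheme \<Rightarrow> ('a \<Rightarrow> 'b \<Rightarrow> 'b) \<Rightarrow>
   'a \<times> 'b \<Rightarrow> 'a \<times> 'b \<Rightarrow> 'a \<times> 'b \<Rightarrow> 'a \<times> 'b"
where
  "cone_biaction G0 G1 act m m' n =
     cone_tensor G0 G1 act (cone_tensor G0 G1 act m n) (cone_tensor_inv G0 G1 act m')"

definition cone_map :: "('c \<Rightarrow> 'a) \<Rightarrow> ('e \<Rightarrow> 'b) \<Rightarrow> 'c \<times> 'e \<Rightarrow> 'a \<times> 'b" where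
  "cone_map f0 f1 m = (f0 (fst m), f1 (snd m))"

definition pair_action ::
  "('a, 'm) monoid_scheme \<Rightarrow> ('b, 'n) monoid_scheme \<Rightarrow> ('a \<Rightarrow> 'b \<Rightarrow> 'b) \<Rightarrow>
   ('c \<Rightarrow> 'a) \<Rightarrow> ('e \<Rightarrow> 'b) \<Rightarrow> ('c \<Rightarrow> 'a) \<Rightarrow> ('e \<Rightarrow> 'b) \<Rightarrow>
   'c \<times> 'e \<Rightarrow> 'a \<times> 'b \<Rightarrow> 'a \<times> 'b"
where
  "pair_action G0 G1 actG p0 p1 q0 q1 mb n =
     cone_biaction G0 G1 actG (cone_map p0 p1 mb) (cone_map q0 q1 mb) n"

text \<open>\<phi>_x : \<pi>1(Cone B) = Aut(1) = Ker dB \<rightarrow> Aut(x) = Ker dG: sends an automorphism \<beta> of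
  the unit object to the induced automorphism \<beta> \<cdot> id_x of 1 \<cdot> x = x (its G1-component).\<close>
definition phi ::
  "('c, 'o) monoid_scheme \<Rightarrow>
   ('a, 'm) monoid_scheme \<Rightarrow> ('b, 'n) monoid_scheme \<Rightarrow> ('a \<Rightarrow> 'b \<Rightarrow> 'b) \<Rightarrow>
   ('c \<Rightarrow> 'a) \<Rightarrow> ('e \<Rightarrow> 'b) \<Rightarrow> ('c \<Rightarrow> 'a) \<Rightarrow> ('e \<Rightarrow> 'b) \<Rightarrow> 'a \<Rightarrow> 'e \<Rightarrow> 'b"
where
  "phi B0 G0 G1 actG p0 p1 q0 q1 x \<beta> =
     snd (pair_action G0 G1 actG p0 p1 q0 q1 (\<one>\<^bsub>B0\<^esub>, \<beta>) (cone_id G1 x))"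

end

theory Submission
  imports Defs
begin

text \<open>The two factors commute because \<pi>(\<beta>) lies in Ker(d) (\<pi> commutes
  with the boundaries), and Ker(d) is central in G1: if d(\<gamma>) = 1 then \<gamma>\<gamma>'\<gamma>\<inverse> = 1\<gamma>' = \<gamma>'.\<close>

lemma crossed_module_kernel_central:
  assumes cm: "crossed_module G0 G1 act d"
    and \<gamma>: "\<gamma> \<in> kernel G1 G0 d" and \<gamma>': "\<gamma>' \<in> carrier G1"
  shows "\<gamma> \<otimes>\<^bsub>G1\<^esub> \<gamma>' = \<gamma>' \<otimes>\<^bsub>G1\<^esub> \<gamma>"
proof -
  interpret G1: group G1 using cm by (simp add: crossed_module_def)
  have \<gamma>_carrier: "\<gamma> \<in> carrier G1" and d\<gamma>: "d \<gamma> = \<one>\<^bsub>G0\<^esub>"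
    using \<gamma> by (auto simp: kernel_def)
  have "\<gamma>' = \<gamma> \<otimes>\<^bsub>G1\<^esub> \<gamma>' \<otimes>\<^bsub>G1\<^esub> inv\<^bsub>G1\<^esub> \<gamma>"
    using cm \<gamma>_carrier \<gamma>' d\<gamma> unfolding crossed_module_def by metis
  then show ?thesis
    using \<gamma>_carrier \<gamma>' by (metis G1.inv_solve_right' G1.m_closed)
qed

lemma crossed_module_hom_one:
  assumes "crossed_module B0 B1 actB dB" and "crossed_module G0 G1 actG dG"
    and "crossed_module_hom B0 B1 actB dB G0 G1 actG dG f0 f1"
  shows "f0 \<one>\<^bsub>B0\<^esub> = \<one>\<^bsub>G0\<^esub>"
proof -
  have "group_hom B0 G0 f0"
    using assms by (simp add: group_hom_def group_hom_axioms_def crossed_module_def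
        crossed_module_hom_def)
  then show ?thesis by (rule group_hom.hom_one)
qed

lemma crossed_module_hom_kernel:
  assumes cmB: "crossed_module B0 B1 actB dB" and cmG: "crossed_module G0 G1 actG dG"
    and f: "crossed_module_hom B0 B1 actB dB G0 G1 actG dG f0 f1"
    and \<beta>: "\<beta> \<in> kernel B1 B0 dB"
  shows "f1 \<beta> \<in> kernel G1 G0 dG"
proof -
  have \<beta>_carrier: "\<beta> \<in> carrier B1" and d\<beta>: "dB \<beta> = \<one>\<^bsub>B0\<^esub>"
    using \<beta> by (auto simp: kernel_def)
  have "f1 \<beta> \<in> carrier G1"
    using f \<beta>_carrier by (auto simp: crossed_module_hom_def hom_def)
  moreover have "dG (f1 \<beta>) = f0 (dB \<beta>)"
    using f \<beta>_carrier by (simp add: crossed_module_hom_def)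
  ultimately show ?thesis
    using d\<beta> crossed_module_hom_one[OF cmB cmG f] by (simp add: kernel_def)
qed

lemma phi_eq:
  assumes cmB: "crossed_module B0 B1 actB dB" and cmG: "crossed_module G0 G1 actG dG"
    and p: "crossed_module_hom B0 B1 actB dB G0 G1 actG dG p0 p1"
    and q: "crossed_module_hom B0 B1 actB dB G0 G1 actG dG q0 q1"
    and g: "g \<in> carrier G0" and \<beta>: "\<beta> \<in> carrier B1"
  shows "phi B0 G0 G1 actG p0 p1 q0 q1 g \<beta> = p1 \<beta> \<otimes>\<^bsub>G1\<^esub> actG g (inv\<^bsub>G1\<^esub> (q1 \<beta>))"
proof -
  interpret G0: group G0 using cmG by (simp add: crossed_module_def)
  interpret G1: group G1 using cmG by (simp add: crossed_module_def)
  have act_one: "\<And>\<gamma>. \<gamma> \<in> carrier G1 \<Longrightarrow> actG \<one>\<^bsub>G0\<^esub> \<gamma> = \<gamma>"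
    using cmG by (simp add: crossed_module_def)
  have "p1 \<beta> \<in> carrier G1" and "q1 \<beta> \<in> carrier G1"
    using p q \<beta> by (auto simp: crossed_module_hom_def hom_def)
  then show ?thesis
    unfolding phi_def pair_action_def cone_biaction_def cone_map_def cone_tensor_def
      cone_tensor_inv_def cone_id_def
    using g act_one crossed_module_hom_one[OF cmB cmG p] crossed_module_hom_one[OF cmB cmG q]
    by simp
qed

theorem lemma2p1:
  fixes B0 :: "('a, 'm) monoid_scheme" and B1 :: "('b, 'n) monoid_scheme"
    and G0 :: "('c, 'o) monoid_scheme" and G1 :: "('e, 'p) monoid_scheme"
  assumes "crossed_module B0 B1 actB dB"
    and "crossed_module G0 G1 actG dG"
    and "crossed_module_hom B0 B1 actB dB G0 G1 actG dG p0 p1"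
    and "crossed_module_hom B0 B1 actB dB G0 G1 actG dG q0 q1"
    and "g \<in> carrier G0"
    and "\<beta> \<in> kernel B1 B0 dB"
  shows "phi B0 G0 G1 actG p0 p1 q0 q1 g \<beta>
           = p1 \<beta> \<otimes>\<^bsub>G1\<^esub> actG g (inv\<^bsub>G1\<^esub> (q1 \<beta>))
       \<and> phi B0 G0 G1 actG p0 p1 q0 q1 g \<beta>
           = actG g (inv\<^bsub>G1\<^esub> (q1 \<beta>)) \<otimes>\<^bsub>G1\<^esub> p1 \<beta>"
proof -
  have \<beta>_carrier: "\<beta> \<in> carrier B1" using assms(6) by (simp add: kernel_def)
  have phi: "phi B0 G0 G1 actG p0 p1 q0 q1 g \<beta> = p1 \<beta> \<otimes>\<^bsub>G1\<^esub> actG g (inv\<^bsub>G1\<^esub> (q1 \<beta>))"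
    using phi_eq[OF assms(1-5) \<beta>_carrier] .
  have "inv\<^bsub>G1\<^esub> (q1 \<beta>) \<in> carrier G1"
    using assms(2,4) \<beta>_carrier
    by (auto simp: crossed_module_def crossed_module_hom_def hom_def intro: group.inv_closed)
  then have "actG g (inv\<^bsub>G1\<^esub> (q1 \<beta>)) \<in> carrier G1"
    using assms(2,5) by (auto simp: crossed_module_def hom_def)
  moreover have "p1 \<beta> \<in> kernel G1 G0 dG"
    using crossed_module_hom_kernel[OF assms(1-3,6)] .
  ultimately show ?thesis
    using phi crossed_module_kernel_central[OF assms(2)] by simp
qed

end
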